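(* Let $x_s<x_t$ be integers, let $C\ge 0$, and let $f:[x_s,x_t]\to\mathbb{R}$ be such that $([x_s,x_t],f)$ is an Ameso($C$) pair. If there exist $x',z_s,z_t\in[x_s,x_t]$ with $z_s<x'<z_t$, $f(z_s)-f(x')\ge C$ and $f(z_t)-f(x')\ge C$, then $\min_{y\in[z_s,z_t]}f(y)=\min_{y\in[x_s,x_t]}f(y)$.
   Context: For integers $a\le b$, $[a,b]$ denotes the set of integers $\{a,\dots,b\}$. Floors and ceilings of vectors are taken componentwise. A set $D^n\subseteq\mathbb{Z}^n$ is an Ameso set if $\lceil(\vec x+\vec y)/2\rceil,\lfloor(\vec x+\vec y)/2\rfloor\in D^n$ for all $\vec x,\vec y\in D^n$. For $C\ge 0$, $(D^n,f)$ is an Ameso($C$) pair if $D^n$ is an Ameso set, $f:D^n\to\mathbb{R}$ is bounded below, and $f(\vec x)+f(\vec y)+C\ge f(\lceil(\vec x+\vec y)/2\rceil)+f(\lfloor(\vec x+\vec y)/2\rfloor)$ for all $\vec x,\vec y\in D^n$. *)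

theory Defs
  imports "HOL-Analysis.Analysis"
begin

(* One-dimensional (n = 1) instances of the paper's notions: D \<subseteq> \<int>, f : D \<rightarrow> \<real>. *)

definition ameso_set :: "int set \<Rightarrow> bool" where
  "ameso_set D \<longleftrightarrow>
     (\<forall>x\<in>D. \<forall>y\<in>D. \<lceil>(real_of_int x + real_of_int y) / 2\<rceil> \<in> D \<and>
                      \<lfloor>(real_of_int x + real_of_int y) / 2\<rfloor> \<in> D)"

definition ameso_pair :: "real \<Rightarrow> int set \<Rightarrow> (int \<Rightarrow> real) \<Rightarrow> bool" where
  "ameso_pair C D f \<longleftrightarrow>
     ameso_set D \<and> (\<exists>b. \<forall>x\<in>D. b \<le> f x) \<and>
     (\<forall>x\<in>D. \<forall>y\<in>D.
        f x + f y + C \<ge> f \<lceil>(real_of_int x + real_of_int y) / 2\<rceil>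
                       + f \<lfloor>(real_of_int x + real_of_int y) / 2\<rfloor>)"

end

theory Submission
  imports Defs
begin

(* The Ameso inequality at pairs with an integral midpoint says that f is midpoint convex up to
   the error C.  A maximum principle upgrades this to: on an interval [x, y], f lies at most C
   above its chord.  Now if some u outside [z_s, z_t] had f u < f x', then z_t (or z_s) would lie
   strictly between x' and u, where the chord stays below f x'; hence f would be below f x' + C
   there, contrary to the hypothesis. *)

definition int_midpoint_convex :: "real \<Rightarrow> int set \<Rightarrow> (int \<Rightarrow> real) \<Rightarrow> bool" where
  "int_midpoint_convex C D f \<longleftrightarrow>
     (\<forall>p\<in>D. \<forall>q\<in>D. even (p + q) \<longrightarrow> 2 * f ((p + q) div 2) \<le> f p + f q + C)"

lemma ameso_pair_imp_int_midpoint_convex: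
  assumes "ameso_pair C D f"
  shows "int_midpoint_convex C D f"
  unfolding int_midpoint_convex_def
proof (intro ballI impI)
  fix p q assume "p \<in> D" "q \<in> D" "even (p + q)"
  then have mid: "(real_of_int p + real_of_int q) / 2 = real_of_int ((p + q) div 2)"
    by (metis dvd_mult_div_cancel of_int_add of_int_mult of_int_numeral
        nonzero_mult_div_cancel_left zero_neq_numeral)
  from assms \<open>p \<in> D\<close> \<open>q \<in> D\<close>
  have "f \<lceil>(real_of_int p + real_of_int q) / 2\<rceil> + f \<lfloor>(real_of_int p + real_of_int q) / 2\<rfloor>
          \<le> f p + f q + C"
    unfolding ameso_pair_def by blast
  then show "2 * f ((p + q) div 2) \<le> f p + f q + C"
    unfolding mid by simp
qed

lemma int_midpoint_convex_subset:
  "int_midpoint_convex C D f \<Longrightarrow> D' \<subseteq> D \<Longrightarrow> int_midpoint_convex C D' f"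
  unfolding int_midpoint_convex_def by blast

lemma int_midpoint_convex_chord_bound:
  fixes f :: "int \<Rightarrow> real"
  assumes convex: "int_midpoint_convex C {x..y} f" and u: "u \<in> {x..y}"
  shows "real_of_int (y - x) * f u
           \<le> real_of_int (y - u) * f x + real_of_int (u - x) * f y + real_of_int (y - x) * C"
proof -
  define L where "L w = real_of_int (y - w) * f x + real_of_int (w - x) * f y" for w
  define g where "g w = real_of_int (y - x) * f w - L w" for w
  have fin: "finite (g ` {x..y})" "g ` {x..y} \<noteq> {}"
    using u by auto
  obtain z where z: "z \<in> {x..y}" "g z = Max (g ` {x..y})"
    using Max_in[OF fin] by (metis imageE)
  have z_max: "g w \<le> g z" if "w \<in> {x..y}" for w
    using z fin that by simp
  \<comment> \<open>Reflect the endpoint nearer to the maximiser z through z.\<close>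
  have "2 * z - x \<in> {x..y} \<or> 2 * z - y \<in> {x..y}"
    using z by auto
  then obtain a where a: "a \<in> {x, y}" and v: "2 * z - a \<in> {x..y}"
    by blast
  define v where "v = 2 * z - a"
  have "a \<in> {x..y}" "g a = 0"
    using a z(1) unfolding g_def L_def by (auto simp: algebra_simps)
  have "even (a + v)" "(a + v) div 2 = z"
    unfolding v_def by auto
  with convex \<open>a \<in> {x..y}\<close> v have "2 * f z \<le> f a + f v + C"
    unfolding int_midpoint_convex_def by (metis v_def)
  then have "real_of_int (y - x) * (2 * f z) \<le> real_of_int (y - x) * (f a + f v + C)"
    using z(1) by (intro mult_left_mono) auto
  moreover have "g v \<le> g z"
    using z_max v unfolding v_def .
  moreover have "L a + L v = 2 * L z"
    unfolding L_def v_def by (simp add: algebra_simps)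
  ultimately have "g z \<le> real_of_int (y - x) * C"
    using \<open>g a = 0\<close> unfolding g_def by (simp add: algebra_simps)
  with z_max[OF u] show ?thesis
    unfolding g_def L_def by simp
qed

lemma int_midpoint_convex_below_max:
  fixes f :: "int \<Rightarrow> real"
  assumes "int_midpoint_convex C {x..y} f" and "x < z" "z < y" and "f x \<noteq> f y"
  shows "f z < max (f x) (f y) + C"
proof -
  let ?M = "max (f x) (f y)"
  have "real_of_int (y - z) * f x + real_of_int (z - x) * f y
          < real_of_int (y - z) * ?M + real_of_int (z - x) * ?M"
    using assms by (cases "f x < f y") (simp_all add: max_def mult_strict_left_mono)
  with int_midpoint_convex_chord_bound[OF assms(1), of z] assms
  have "real_of_int (y - x) * f z < real_of_int (y - x) * (?M + C)"
    by (simp add: algebra_simps)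
  with assms show ?thesis
    by (simp add: mult_less_cancel_left)
qed

lemma Min_image_subset_eq:
  assumes "finite B" "A \<subseteq> B" "a \<in> A" "\<And>b. b \<in> B - A \<Longrightarrow> f a \<le> f b"
  shows "Min (f ` A) = Min (f ` B)"
proof (rule antisym)
  have "finite A"
    using assms finite_subset by blast
  show "Min (f ` A) \<le> Min (f ` B)"
  proof (rule Min.boundedI)
    fix t assume "t \<in> f ` B"
    with assms \<open>finite A\<close> show "Min (f ` A) \<le> t"
      by (metis DiffI Min_le dual_order.trans finite_imageI imageE image_eqI)
  qed (use assms in auto)
  show "Min (f ` B) \<le> Min (f ` A)"
    using assms \<open>finite A\<close> by (intro Min_antimono) auto
qed

theorem corollary4:
  fixes x_s x_t :: int and C :: real and f :: "int \<Rightarrow> real"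
  assumes "x_s < x_t"
    and "C \<ge> 0"
    and "ameso_pair C {x_s..x_t} f"
    and "x' \<in> {x_s..x_t}" and "z_s \<in> {x_s..x_t}" and "z_t \<in> {x_s..x_t}"
    and "z_s < x'" and "x' < z_t"
    and "f z_s - f x' \<ge> C" and "f z_t - f x' \<ge> C"
  shows "Min (f ` {z_s..z_t}) = Min (f ` {x_s..x_t})"
proof (rule Min_image_subset_eq)
  have convex: "int_midpoint_convex C I f" if "I \<subseteq> {x_s..x_t}" for I
    using ameso_pair_imp_int_midpoint_convex[OF assms(3)] int_midpoint_convex_subset that by blast
  fix u assume u: "u \<in> {x_s..x_t} - {z_s..z_t}"
  show "f x' \<le> f u"
  proof (rule ccontr)
    assume "\<not> f x' \<le> f u"
    then have below: "f u < f x'" "f x' \<noteq> f u"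
      by auto
    from u consider "z_t < u" | "u < z_s"
      by fastforce
    then show False
    proof cases
      case 1
      have "int_midpoint_convex C {x'..u} f"
        using convex u assms(4) by auto
      from int_midpoint_convex_below_max[OF this] 1 below assms have "f z_t < f x' + C"
        by auto
      with assms show False by simp
    next
      case 2
      have "int_midpoint_convex C {u..x'} f"
        using convex u assms(4) by auto
      from int_midpoint_convex_below_max[OF this] 2 below assms have "f z_s < f x' + C"
        by auto
      with assms show False by simp
    qed
  qed
qed (use assms in auto)

end
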